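(* For any linearizable sketch and any $\lambda>0$, \[ H(\mathbf Y_{[\lambda]})=\sum_{i}\dot H(p_i\lambda)\,\Pr\big(\phi(Y_{0,\lambda},\dots,Y_{i-1,\lambda})=0\big),\qquad \lambda^2 I_{\mathbf Y}(\lambda)=\sum_{i}\dot I(p_i\lambda)\,\Pr\big(\phi(Y_{0,\lambda},\dots,Y_{i-1,\lambda})=0\big), \] the sums ranging over all cell indices $i$.
   Context: Dartboard model: the unit square is partitioned into a finite or countable sequence of cells $c_0,c_1,\dots$ with sizes (areas) $p_i>0$, $\sum_ip_i=1$. Darts arrive according to a Poisson process of rate 1 in time, each landing uniformly; thus at time (cardinality) $\lambda$ the numbers of darts in the cells are independent $\mathrm{Poisson}(p_i\lambda)$ variables. Let $Z_{i,\lambda}$ be the indicator that $c_i$ has been hit by time $\lambda$. A linearizable sketch is given by a function $\phi:\{0,1\}^*\to\{0,1\}$ on finite binary strings that is monotone (coordinatewise $y\le y'$ of equal length implies $\phi(y)\le\phi(y')$), and the cell-occupancy indicators are defined recursively by $Y_{i,\lambda}=Z_{i,\lambda}\vee\phi(Y_{0,\lambda},\dots,Y_{i-1,\lambda})$ (with $\phi$ of the empty string for $i=0$). The state at time $\lambda$ is $\mathbf Y_{[\lambda]}=(Y_{0,\lambda},Y_{1,\lambda},\dots)$; $H(\mathbf Y_{[\lambda]})$ is its Shannon entropy in bits and $I_{\mathbf Y}(\lambda)$ the Fisher information of $\lambda$ with respect to it (standard regularity assumed). $\dot H(t)=\frac{1}{\ln2}\big(te^{-t}-(1-e^{-t})\ln(1-e^{-t})\big)$,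 $\dot I(t)=\frac{t^2}{e^t-1}$. *)

theory Defs
  imports "HOL-Probability.Probability"
begin

definition mono_sketch :: "(bool list \<Rightarrow> bool) \<Rightarrow> bool" where
  "mono_sketch \<phi> \<longleftrightarrow>
     (\<forall>xs ys. length xs = length ys \<longrightarrow> list_all2 (\<le>) xs ys \<longrightarrow> \<phi> xs \<le> \<phi> ys)"

definition dartboard :: "nat set \<Rightarrow> (nat \<Rightarrow> real) \<Rightarrow> bool" where
  "dartboard C p \<longleftrightarrow> ((\<exists>N. C = {..<N}) \<or> C = UNIV) \<and> (\<forall>i\<in>C. 0 < p i) \<and> (p has_sum 1) C"

definition darts :: "nat set \<Rightarrow> (nat \<Rightarrow> real) \<Rightarrow> real \<Rightarrow> (nat \<Rightarrow> nat) measure" where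
  "darts C p lam = PiM C (\<lambda>i. measure_pmf (poisson_pmf (p i * lam)))"

fun Ypre :: "(bool list \<Rightarrow> bool) \<Rightarrow> (nat \<Rightarrow> nat) \<Rightarrow> nat \<Rightarrow> bool list" where
  "Ypre \<phi> z 0 = []"
| "Ypre \<phi> z (Suc n) = Ypre \<phi> z n @ [0 < z n \<or> \<phi> (Ypre \<phi> z n)]"

(* The full state (Y_0, Y_1, ...); indices that are not cells are set to False. *)
definition Ystate :: "nat set \<Rightarrow> (bool list \<Rightarrow> bool) \<Rightarrow> (nat \<Rightarrow> nat) \<Rightarrow> nat \<Rightarrow> bool" where
  "Ystate C \<phi> z i = (i \<in> C \<and> Ypre \<phi> z (Suc i) ! i)"

definition Ypmf :: "nat set \<Rightarrow> (nat \<Rightarrow> real) \<Rightarrow> (bool list \<Rightarrow> bool) \<Rightarrow> real \<Rightarrow> (nat \<Rightarrow> bool) \<Rightarrow> real" where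
  "Ypmf C p \<phi> lam y = measure (darts C p lam) {z \<in> space (darts C p lam). Ystate C \<phi> z = y}"

definition entropyY :: "nat set \<Rightarrow> (nat \<Rightarrow> real) \<Rightarrow> (bool list \<Rightarrow> bool) \<Rightarrow> real \<Rightarrow> ennreal" where
  "entropyY C p \<phi> lam =
     (\<Sum>\<^sub>\<infinity>y \<in> {y. 0 < Ypmf C p \<phi> lam y}. ennreal (- Ypmf C p \<phi> lam y * log 2 (Ypmf C p \<phi> lam y)))"

definition fisherY :: "nat set \<Rightarrow> (nat \<Rightarrow> real) \<Rightarrow> (bool list \<Rightarrow> bool) \<Rightarrow> real \<Rightarrow> ennreal" where
  "fisherY C p \<phi> lam =
     (\<Sum>\<^sub>\<infinity>y \<in> {y. 0 < Ypmf C p \<phi> lam y}.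
        ennreal ((deriv (\<lambda>l. Ypmf C p \<phi> l y) lam)\<^sup>2 / Ypmf C p \<phi> lam y))"

definition prPhi0 :: "nat set \<Rightarrow> (nat \<Rightarrow> real) \<Rightarrow> (bool list \<Rightarrow> bool) \<Rightarrow> real \<Rightarrow> nat \<Rightarrow> real" where
  "prPhi0 C p \<phi> lam i = measure (darts C p lam) {z \<in> space (darts C p lam). \<not> \<phi> (Ypre \<phi> z i)}"

definition Hdot :: "real \<Rightarrow> real" where
  "Hdot t = (t * exp (-t) - (1 - exp (-t)) * ln (1 - exp (-t))) / ln 2"

definition Idot :: "real \<Rightarrow> real" where
  "Idot t = t\<^sup>2 / (exp t - 1)"

end

theory Submission
  imports Defs
begin

text \<open>
  Given the earlier indicators, \<open>Y\<^sub>i\<close> is forced to \<open>1\<close> when \<open>\<phi>\<close> fires and is otherwise the hit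
  indicator of cell \<open>i\<close>, which is independent of the past and equals \<open>1\<close> with probability
  \<open>1 - exp (- p\<^sub>i \<lambda>)\<close>. So the probability of a state factorises over its free cells, and its
  information content \<open>- log P(Y)\<close> and score \<open>d/d\<lambda> log P(Y)\<close> are almost surely sums of
  per-cell terms. Conditionally on a past with \<open>\<phi> = 0\<close>, the surprisal of cell \<open>i\<close> has mean
  \<open>Hdot (p\<^sub>i \<lambda>)\<close>, and its score has mean \<open>0\<close> and variance \<open>Idot (p\<^sub>i \<lambda>) / \<lambda>\<^sup>2\<close>. Summing the
  means (Tonelli) gives the entropy. The scores form a martingale difference sequence, hence are
  orthogonal, so the Fisher information is the sum of the variances; the exchange of sum and
  expectation is justified by dominated convergence using \<open>E |s\<^sub>i s\<^sub>j| \<le> 4 p\<^sub>i p\<^sub>j\<close>.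
\<close>

lemma infsum_ennreal_eq_nn_integral:
  fixes f :: "'a \<Rightarrow> ennreal"
  assumes "countable A"
  shows "infsum f A = (\<integral>\<^sup>+x. f x \<partial>count_space A)"
proof (cases "finite A")
  case True then show ?thesis by (simp add: nn_integral_count_space_finite)
next
  case False
  have bij: "bij_betw (from_nat_into A) UNIV A" by (rule bij_betw_from_nat_into[OF assms False])
  have "infsum f A = infsum (\<lambda>n. f (from_nat_into A n)) UNIV"
    by (rule infsum_reindex_bij_betw[OF bij, symmetric])
  also have "\<dots> = (\<Sum>n. f (from_nat_into A n))"
    by (intro sums_unique has_sum_imp_sums has_sum_infsum nonneg_summable_on_complete) simp
  also have "\<dots> = (\<integral>\<^sup>+n. f (from_nat_into A n) \<partial>count_space UNIV)"
    by (simp add: nn_integral_count_space_nat)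
  also have "\<dots> = (\<integral>\<^sup>+x. f x \<partial>count_space A)"
    by (rule nn_integral_bij_count_space[OF bij])
  finally show ?thesis .
qed

lemma infsum_ennreal_eq_suminf:
  fixes f :: "nat \<Rightarrow> ennreal"
  shows "infsum f A = (\<Sum>i. if i \<in> A then f i else 0)"
proof -
  have "infsum f A = infsum (\<lambda>i. if i \<in> A then f i else 0) UNIV"
    by (rule infsum_cong_neutral) auto
  also have "\<dots> = (\<Sum>i. if i \<in> A then f i else 0)"
    by (intro sums_unique has_sum_imp_sums has_sum_infsum nonneg_summable_on_complete) simp
  finally show ?thesis .
qed

lemma binary_entropy_exp_eq_Hdot:
  fixes t :: real assumes "0 < t"
  shows "(1 - exp (-t)) * - log 2 (1 - exp (-t)) + exp (-t) * - log 2 (exp (-t)) = Hdot t"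
  by (simp add: log_def Hdot_def field_simps)

lemma one_minus_exp_minus_mult:
  fixes t c :: real assumes "0 < t"
  shows "(1 - exp (-t)) * (c / (exp t - 1)) = exp (-t) * c"
proof -
  have "exp t - 1 \<noteq> 0" using assms by simp
  then show ?thesis by (simp add: exp_minus field_simps)
qed

lemma one_minus_exp_minus_mult_sq:
  fixes t c :: real assumes "0 < t"
  shows "(1 - exp (-t)) * (c / (exp t - 1))\<^sup>2 + exp (-t) * c\<^sup>2 = c\<^sup>2 / (exp t - 1)"
proof -
  have "(1 - exp (-t)) * (c / (exp t - 1))\<^sup>2 = ((1 - exp (-t)) * (c / (exp t - 1))) * (c / (exp t - 1))"
    by (simp add: power2_eq_square)
  also have "\<dots> = exp (-t) * c * (c / (exp t - 1))"
    using one_minus_exp_minus_mult[OF assms, of c] by simp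
  finally have "(1 - exp (-t)) * (c / (exp t - 1))\<^sup>2 = exp (-t) * c * (c / (exp t - 1))" .
  moreover have "exp t - 1 \<noteq> 0" using assms by simp
  ultimately show ?thesis by (simp add: exp_minus field_simps power2_eq_square)
qed

section \<open>Prefixes of the state\<close>

lemma Ypre_length [simp]: "length (Ypre \<phi> z n) = n"
  by (induction n) auto

lemma Ypre_take: "m \<le> n \<Longrightarrow> take m (Ypre \<phi> z n) = Ypre \<phi> z m"
  by (induction n) (auto simp: le_Suc_eq)

lemma Ypre_nth: "i < n \<Longrightarrow> Ypre \<phi> z n ! i = (0 < z i \<or> \<phi> (Ypre \<phi> z i))"
proof -
  assume "i < n"
  then have "Ypre \<phi> z n ! i = Ypre \<phi> z (Suc i) ! i"
    by (metis Ypre_take lessI nth_take Suc_leI)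
  then show ?thesis by (simp add: nth_append)
qed

lemma Ypre_nth_Suc: "i < n \<Longrightarrow> Ypre \<phi> z n ! i = Ypre \<phi> z (Suc i) ! i"
  by (simp add: Ypre_nth nth_append)

lemma Ypre_eq_iff:
  "Ypre \<phi> z n = w \<longleftrightarrow> length w = n \<and> (\<forall>i<n. w ! i = (0 < z i \<or> \<phi> (take i w)))"
proof (induction n arbitrary: w)
  case 0 then show ?case by auto
next
  case (Suc n)
  show ?case
  proof
    assume "Ypre \<phi> z (Suc n) = w"
    then show "length w = Suc n \<and> (\<forall>i<Suc n. w ! i = (0 < z i \<or> \<phi> (take i w)))"
      by (auto simp del: Ypre.simps simp: Ypre_nth Ypre_take)
  next
    assume h: "length w = Suc n \<and> (\<forall>i<Suc n. w ! i = (0 < z i \<or> \<phi> (take i w)))"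
    then obtain v b where w: "w = v @ [b]" and v: "length v = n"
      by (metis length_Suc_conv_rev)
    have "\<forall>i<n. v ! i = (0 < z i \<or> \<phi> (take i v))"
    proof (intro allI impI)
      fix i assume "i < n"
      then show "v ! i = (0 < z i \<or> \<phi> (take i v))"
        using h[THEN conjunct2, rule_format, of i] w v by (simp add: nth_append)
    qed
    then have "Ypre \<phi> z n = v" using Suc.IH v by blast
    moreover have "b = (0 < z n \<or> \<phi> v)"
      using h[THEN conjunct2, rule_format, of n] w v by (simp add: nth_append)
    ultimately show "Ypre \<phi> z (Suc n) = w" using w by simp
  qed
qed

definition seq_prefix :: "(nat \<Rightarrow> 'a) \<Rightarrow> nat \<Rightarrow> 'a list" where
  "seq_prefix y n = map y [0..<n]"

lemma seq_prefix_length [simp]: "length (seq_prefix y n) = n"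
  by (simp add: seq_prefix_def)

lemma take_seq_prefix: "m \<le> n \<Longrightarrow> take m (seq_prefix y n) = seq_prefix y m"
  by (simp add: seq_prefix_def take_map)

lemma seq_prefix_nth: "i < n \<Longrightarrow> seq_prefix y n ! i = y i"
  by (simp add: seq_prefix_def)

lemma seq_prefix_Suc: "seq_prefix y (Suc n) = seq_prefix y n @ [y n]"
  by (simp add: seq_prefix_def)

definition bool_lists :: "nat \<Rightarrow> bool list set" where
  "bool_lists n = {w. length w = n}"

lemma finite_bool_lists [simp]: "finite (bool_lists n)"
  using finite_lists_length_eq[of "UNIV :: bool set" n] by (simp add: bool_lists_def)

lemma sum_bool_lists_Suc:
  fixes H :: "bool list \<Rightarrow> 'b::comm_monoid_add"
  shows "(\<Sum>v\<in>bool_lists (Suc n). H v) = (\<Sum>w\<in>bool_lists n. H (w @ [True]) + H (w @ [False]))"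
proof -
  have eq: "bool_lists (Suc n) = (\<lambda>(w, b). w @ [b]) ` (bool_lists n \<times> UNIV)"
    by (auto simp: bool_lists_def length_Suc_conv_rev image_iff)
  have inj: "inj_on (\<lambda>(w, b). w @ [b]) (bool_lists n \<times> (UNIV :: bool set))"
    by (auto simp: inj_on_def)
  have "(\<Sum>v\<in>bool_lists (Suc n). H v) = (\<Sum>w\<in>bool_lists n. \<Sum>b\<in>UNIV. H (w @ [b]))"
    unfolding eq sum.reindex[OF inj] sum.cartesian_product by (simp add: case_prod_beta)
  then show ?thesis by (simp add: UNIV_bool add.commute)
qed

section \<open>The dartboard model\<close>

locale dartboard_sketch =
  fixes C :: "nat set" and p :: "nat \<Rightarrow> real" and \<phi> :: "bool list \<Rightarrow> bool"
  assumes dartboard: "dartboard C p"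
begin

lemma cells_cases: "(\<exists>N. C = {..<N}) \<or> C = UNIV"
  using dartboard unfolding dartboard_def by blast

lemma cells_down_closed: "i \<in> C \<Longrightarrow> j \<le> i \<Longrightarrow> j \<in> C"
  using cells_cases by auto

lemma size_pos: "i \<in> C \<Longrightarrow> 0 < p i"
  using dartboard unfolding dartboard_def by blast

definition cell_size :: "nat \<Rightarrow> real" where
  "cell_size i = (if i \<in> C then p i else 0)"

lemma cell_size_nonneg: "0 \<le> cell_size i"
  using size_pos by (auto simp: cell_size_def less_imp_le)

lemma cell_size_sums: "cell_size sums 1"
proof -
  have "(p has_sum 1) C" using dartboard unfolding dartboard_def by blast
  then have "(cell_size has_sum 1) UNIV"
    by (rule has_sum_cong_neutral[THEN iffD1, rotated -1]) (auto simp: cell_size_def)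
  then show ?thesis by (rule has_sum_imp_sums)
qed

lemma summable_cell_size: "summable cell_size"
  using cell_size_sums by (simp add: sums_iff)

abbreviation cell_law :: "real \<Rightarrow> nat \<Rightarrow> nat measure" where
  "cell_law l i \<equiv> measure_pmf (poisson_pmf (p i * l))"

abbreviation Darts :: "real \<Rightarrow> (nat \<Rightarrow> nat) measure" where
  "Darts l \<equiv> darts C p l"

lemma Darts_eq_PiM: "Darts l = PiM C (cell_law l)"
  by (simp add: darts_def)

lemma prob_space_Darts: "prob_space (Darts l)"
  unfolding Darts_eq_PiM by (rule prob_space_PiM) (rule prob_space_measure_pmf)

definition miss :: "real \<Rightarrow> nat \<Rightarrow> real" where
  "miss l i = exp (- (p i * l))"

lemma miss_pos: "0 < miss l i"
  by (simp add: miss_def)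

lemma miss_le_1: "0 \<le> l \<Longrightarrow> i \<in> C \<Longrightarrow> miss l i \<le> 1"
  using size_pos[of i] by (simp add: miss_def)

lemma miss_less_1: "0 < l \<Longrightarrow> i \<in> C \<Longrightarrow> miss l i < 1"
  using size_pos[of i] by (simp add: miss_def)

lemma one_minus_miss_le: "1 - miss l i \<le> p i * l"
  using exp_ge_add_one_self[of "- (p i * l)"] by (simp add: miss_def)

lemma measure_cell_miss: "0 < l \<Longrightarrow> i \<in> C \<Longrightarrow> measure (cell_law l i) {0} = miss l i"
  using size_pos[of i] by (simp add: measure_pmf_single miss_def)

lemma measure_cell_hit:
  assumes "0 < l" "i \<in> C"
  shows "measure (cell_law l i) {k. 0 < k} = 1 - miss l i"
proof -
  have "{k::nat. 0 < k} = space (cell_law l i) - {0}" by auto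
  moreover have "measure (cell_law l i) (space (cell_law l i) - {0}) = 1 - measure (cell_law l i) {0}"
    by (rule measure_pmf.prob_compl) simp
  ultimately show ?thesis by (simp add: measure_cell_miss[OF assms])
qed

text \<open>Given the prefix \<open>u\<close> of earlier indicators, \<open>Y\<^sub>i\<close> is forced to \<open>1\<close> if \<open>\<phi> u\<close> fires and is
  otherwise the hit indicator of cell \<open>i\<close>, which is independent of the earlier cells.\<close>

definition cond_prob :: "real \<Rightarrow> bool list \<Rightarrow> bool \<Rightarrow> nat \<Rightarrow> real" where
  "cond_prob l u b i =
     (if \<phi> u then (if b then 1 else 0) else if b then 1 - miss l i else miss l i)"

lemma cond_prob_nonneg: "0 \<le> l \<Longrightarrow> i \<in> C \<Longrightarrow> 0 \<le> cond_prob l u b i"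
  using miss_le_1[of l i] miss_pos[of l i] by (auto simp: cond_prob_def)

lemma cond_prob_le_1: "0 \<le> l \<Longrightarrow> i \<in> C \<Longrightarrow> cond_prob l u b i \<le> 1"
  using miss_le_1[of l i] miss_pos[of l i] by (auto simp: cond_prob_def)

lemma measure_cell_event:
  assumes "0 < l" "i \<in> C"
  shows "measure (cell_law l i) {k. (0 < k \<or> \<phi> u) = b} = cond_prob l u b i"
proof -
  have "{k::nat. \<not> 0 < k} = {0}" by auto
  then show ?thesis
    using measure_cell_miss[OF assms] measure_cell_hit[OF assms] measure_pmf.prob_space
    by (cases "\<phi> u"; cases b) (simp_all add: cond_prob_def)
qed

definition prefix_prob :: "real \<Rightarrow> bool list \<Rightarrow> real" where
  "prefix_prob l w = (\<Prod>i<length w. cond_prob l (take i w) (w ! i) i)"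

lemma prefix_prob_snoc: "prefix_prob l (w @ [b]) = prefix_prob l w * cond_prob l w b (length w)"
  unfolding prefix_prob_def by (simp add: nth_append)

definition cells_below :: "nat \<Rightarrow> bool" where
  "cells_below n \<longleftrightarrow> {..<n} \<subseteq> C"

lemma cells_below_mono: "cells_below n \<Longrightarrow> m \<le> n \<Longrightarrow> cells_below m"
  by (auto simp: cells_below_def)

lemma cells_below_Suc: "i \<in> C \<Longrightarrow> cells_below (Suc i)"
  using cells_down_closed by (auto simp: cells_below_def)

lemma cells_below_cell: "i \<in> C \<Longrightarrow> cells_below i"
  by (rule cells_below_mono[OF cells_below_Suc]) auto

lemma prefix_prob_nonneg: "0 \<le> l \<Longrightarrow> cells_below (length w) \<Longrightarrow> 0 \<le> prefix_prob l w"
  unfolding prefix_prob_def by (auto intro!: prod_nonneg cond_prob_nonneg simp: cells_below_def)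

lemma prefix_prob_le_1: "0 \<le> l \<Longrightarrow> cells_below (length w) \<Longrightarrow> prefix_prob l w \<le> 1"
  unfolding prefix_prob_def
  by (auto intro!: prod_le_1 cond_prob_nonneg cond_prob_le_1 simp: cells_below_def)

definition prefix_event :: "real \<Rightarrow> nat \<Rightarrow> bool list \<Rightarrow> (nat \<Rightarrow> nat) set" where
  "prefix_event l n w = {z \<in> space (Darts l). Ypre \<phi> z n = w}"

lemma prefix_event_prod_emb:
  assumes "cells_below n" "length w = n"
  shows "prefix_event l n w =
    prod_emb C (cell_law l) {..<n} (PiE {..<n} (\<lambda>i. {k. (0 < k \<or> \<phi> (take i w)) = w ! i}))"
  using assms unfolding prefix_event_def prod_emb_def
  by (auto simp: Ypre_eq_iff Darts_eq_PiM restrict_PiE_iff space_PiM cells_below_def)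

lemma prefix_event_sets: "cells_below n \<Longrightarrow> length w = n \<Longrightarrow> prefix_event l n w \<in> sets (Darts l)"
  by (simp add: prefix_event_prod_emb cells_below_def Darts_eq_PiM sets_PiM_I_finite)

lemma measure_prefix_event:
  assumes "0 < l" "cells_below n" "length w = n"
  shows "measure (Darts l) (prefix_event l n w) = prefix_prob l w"
proof -
  have C: "i \<in> C" if "i < n" for i using assms(2) that by (auto simp: cells_below_def)
  have "emeasure (Darts l) (prefix_event l n w) =
      (\<Prod>i<n. emeasure (cell_law l i) {k. (0 < k \<or> \<phi> (take i w)) = w ! i})"
    unfolding prefix_event_prod_emb[OF assms(2,3)] Darts_eq_PiM
    by (rule emeasure_PiM_emb) (auto simp: C prob_space_measure_pmf)
  also have "\<dots> = (\<Prod>i<n. ennreal (cond_prob l (take i w) (w ! i) i))"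
    using measure_cell_event[OF assms(1) C]
    by (intro prod.cong refl) (simp add: measure_pmf.emeasure_eq_measure)
  also have "\<dots> = ennreal (prefix_prob l w)"
    unfolding prefix_prob_def using assms
    by (subst prod_ennreal) (auto intro!: cond_prob_nonneg C)
  finally show ?thesis
    using prefix_prob_nonneg[of l w] assms by (simp add: measure_def)
qed

lemma integral_prefix_fun:
  fixes F :: "bool list \<Rightarrow> real"
  assumes "0 < l" "cells_below n"
  shows "integrable (Darts l) (\<lambda>z. F (Ypre \<phi> z n))"
    and "(\<integral>z. F (Ypre \<phi> z n) \<partial>Darts l) = (\<Sum>w\<in>bool_lists n. F w * prefix_prob l w)"
proof -
  interpret P: prob_space "Darts l" by (rule prob_space_Darts)
  have sets: "w \<in> bool_lists n \<Longrightarrow> prefix_event l n w \<in> sets (Darts l)" for w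
    using prefix_event_sets[OF assms(2)] by (simp add: bool_lists_def)
  have eq: "F (Ypre \<phi> z n) = (\<Sum>w\<in>bool_lists n. F w * indicator (prefix_event l n w) z)"
    if "z \<in> space (Darts l)" for z
  proof -
    have "(\<Sum>w\<in>bool_lists n. F w * indicator (prefix_event l n w) z) =
        (\<Sum>w\<in>bool_lists n. if w = Ypre \<phi> z n then F w else 0)"
      using that by (intro sum.cong) (auto simp: prefix_event_def)
    also have "\<dots> = F (Ypre \<phi> z n)"
      using finite_bool_lists[of n] by (simp add: bool_lists_def)
    finally show ?thesis by simp
  qed
  have int: "integrable (Darts l) (\<lambda>z. F w * indicator (prefix_event l n w) z)"
    if "w \<in> bool_lists n" for w
    using sets[OF that] by (intro integrable_mult_right integrable_real_indicator) (auto simp: less_top[symmetric])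
  have "integrable (Darts l) (\<lambda>z. \<Sum>w\<in>bool_lists n. F w * indicator (prefix_event l n w) z)"
    by (intro Bochner_Integration.integrable_sum int)
  then show "integrable (Darts l) (\<lambda>z. F (Ypre \<phi> z n))"
    by (rule Bochner_Integration.integrable_cong[THEN iffD2, OF refl eq, rotated])
  have "(\<integral>z. F (Ypre \<phi> z n) \<partial>Darts l) =
      (\<integral>z. (\<Sum>w\<in>bool_lists n. F w * indicator (prefix_event l n w) z) \<partial>Darts l)"
    by (rule Bochner_Integration.integral_cong[OF refl eq])
  also have "\<dots> = (\<Sum>w\<in>bool_lists n. \<integral>z. F w * indicator (prefix_event l n w) z \<partial>Darts l)"
    by (rule Bochner_Integration.integral_sum[OF int])
  also have "\<dots> = (\<Sum>w\<in>bool_lists n. F w * measure (Darts l) (prefix_event l n w))"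
    using sets by (intro sum.cong refl) simp
  also have "\<dots> = (\<Sum>w\<in>bool_lists n. F w * prefix_prob l w)"
    using measure_prefix_event[OF assms] by (simp add: bool_lists_def)
  finally show "(\<integral>z. F (Ypre \<phi> z n) \<partial>Darts l) = (\<Sum>w\<in>bool_lists n. F w * prefix_prob l w)" .
qed

definition cond_mean :: "real \<Rightarrow> nat \<Rightarrow> (bool list \<Rightarrow> bool \<Rightarrow> real) \<Rightarrow> bool list \<Rightarrow> real" where
  "cond_mean l j K w = cond_prob l w True j * K w True + cond_prob l w False j * K w False"

lemma integral_next_cell:
  fixes K :: "bool list \<Rightarrow> bool \<Rightarrow> real"
  assumes "0 < l" "j \<in> C"
  shows "integrable (Darts l) (\<lambda>z. K (Ypre \<phi> z j) (0 < z j \<or> \<phi> (Ypre \<phi> z j)))"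
    and "(\<integral>z. K (Ypre \<phi> z j) (0 < z j \<or> \<phi> (Ypre \<phi> z j)) \<partial>Darts l) =
      (\<integral>z. cond_mean l j K (Ypre \<phi> z j) \<partial>Darts l)"
proof -
  define F where "F v = K (take j v) (v ! j)" for v
  have eq: "K (Ypre \<phi> z j) (0 < z j \<or> \<phi> (Ypre \<phi> z j)) = F (Ypre \<phi> z (Suc j))" for z
    by (simp add: F_def nth_append)
  note step = integral_prefix_fun[OF assms(1) cells_below_Suc[OF assms(2)], of F]
  note prefix = integral_prefix_fun[OF assms(1) cells_below_cell[OF assms(2)], of "cond_mean l j K"]
  show "integrable (Darts l) (\<lambda>z. K (Ypre \<phi> z j) (0 < z j \<or> \<phi> (Ypre \<phi> z j)))"
    unfolding eq by (rule step(1))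
  show "(\<integral>z. K (Ypre \<phi> z j) (0 < z j \<or> \<phi> (Ypre \<phi> z j)) \<partial>Darts l) =
      (\<integral>z. cond_mean l j K (Ypre \<phi> z j) \<partial>Darts l)"
    unfolding eq step(2) prefix(2) sum_bool_lists_Suc
    by (intro sum.cong refl)
       (simp add: F_def cond_mean_def prefix_prob_snoc bool_lists_def algebra_simps nth_append)
qed

lemma prPhi0_eq_integral:
  assumes "0 < l" "i \<in> C"
  shows "prPhi0 C p \<phi> l i = (\<integral>z. (if \<phi> (Ypre \<phi> z i) then 0 else 1) \<partial>Darts l)"
proof -
  let ?A = "{z \<in> space (Darts l). \<not> \<phi> (Ypre \<phi> z i)}"
  have "?A = (\<Union>w\<in>{w\<in>bool_lists i. \<not> \<phi> w}. prefix_event l i w)"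
    by (auto simp: prefix_event_def bool_lists_def)
  then have "?A \<in> sets (Darts l)"
    using prefix_event_sets[OF cells_below_cell[OF assms(2)]] by (auto simp: bool_lists_def)
  then have "prPhi0 C p \<phi> l i = (\<integral>z. indicator ?A z \<partial>Darts l)"
    by (simp add: prPhi0_def)
  also have "\<dots> = (\<integral>z. (if \<phi> (Ypre \<phi> z i) then 0 else 1) \<partial>Darts l)"
    by (rule Bochner_Integration.integral_cong[OF refl]) (simp add: indicator_def)
  finally show ?thesis .
qed

lemma integral_next_cell_const:
  fixes K :: "bool list \<Rightarrow> bool \<Rightarrow> real"
  assumes "0 < l" "j \<in> C" and mean: "\<And>w. cond_mean l j K w = (if \<phi> w then 0 else c)"
  shows "(\<integral>z. K (Ypre \<phi> z j) (0 < z j \<or> \<phi> (Ypre \<phi> z j)) \<partial>Darts l) = c * prPhi0 C p \<phi> l j"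
proof -
  have "(\<integral>z. K (Ypre \<phi> z j) (0 < z j \<or> \<phi> (Ypre \<phi> z j)) \<partial>Darts l) =
      (\<integral>z. c * (if \<phi> (Ypre \<phi> z j) then 0 else 1) \<partial>Darts l)"
    unfolding integral_next_cell(2)[OF assms(1,2)] mean by (rule Bochner_Integration.integral_cong) simp_all
  then show ?thesis by (simp add: prPhi0_eq_integral[OF assms(1,2)])
qed

lemma prPhi0_bounds: "0 \<le> prPhi0 C p \<phi> l i" "prPhi0 C p \<phi> l i \<le> 1"
  unfolding prPhi0_def by (simp_all add: prob_space.prob_le_1[OF prob_space_Darts])

section \<open>Per-cell surprisal and score\<close>

text \<open>\<open>hit_score l i\<close> and \<open>-p i\<close> are the derivatives in \<open>l\<close> of \<open>ln (1 - exp (- p i * l))\<close>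
  and \<open>ln (exp (- p i * l))\<close>: the score contributed by cell \<open>i\<close> when its indicator is free.\<close>

definition hit_score :: "real \<Rightarrow> nat \<Rightarrow> real" where
  "hit_score l i = p i / (exp (p i * l) - 1)"

definition cell_score :: "real \<Rightarrow> nat \<Rightarrow> bool list \<Rightarrow> bool \<Rightarrow> real" where
  "cell_score l i u b = (if \<phi> u then 0 else if b then hit_score l i else - p i)"

definition surprisal_at :: "real \<Rightarrow> nat \<Rightarrow> (nat \<Rightarrow> nat) \<Rightarrow> real" where
  "surprisal_at l i z =
     (if i \<in> C then - log 2 (cond_prob l (Ypre \<phi> z i) (0 < z i \<or> \<phi> (Ypre \<phi> z i)) i) else 0)"

definition score_at :: "real \<Rightarrow> nat \<Rightarrow> (nat \<Rightarrow> nat) \<Rightarrow> real" where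
  "score_at l i z = (if i \<in> C then cell_score l i (Ypre \<phi> z i) (0 < z i \<or> \<phi> (Ypre \<phi> z i)) else 0)"

lemma hit_score_pos: "0 < l \<Longrightarrow> i \<in> C \<Longrightarrow> 0 < hit_score l i"
  using size_pos[of i] by (simp add: hit_score_def)

lemma miss_hit_score: "0 < l \<Longrightarrow> i \<in> C \<Longrightarrow> (1 - miss l i) * hit_score l i = miss l i * p i"
  using one_minus_exp_minus_mult[of "p i * l" "p i"] size_pos[of i]
  by (simp add: miss_def hit_score_def)

lemma surprisal_at_nonneg:
  assumes "0 \<le> l"
  shows "0 \<le> surprisal_at l i z"
proof (cases "i \<in> C")
  case True
  let ?g = "cond_prob l (Ypre \<phi> z i) (0 < z i \<or> \<phi> (Ypre \<phi> z i)) i"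
  have "0 \<le> ?g" "?g \<le> 1" using cond_prob_nonneg cond_prob_le_1 assms True by auto
  then have "log 2 ?g \<le> 0"
    by (cases "?g = 0") (simp_all add: log_def divide_nonpos_pos)
  then show ?thesis using True by (simp add: surprisal_at_def)
qed (simp add: surprisal_at_def)

lemma integral_surprisal_at:
  assumes "0 < l"
  shows "integrable (Darts l) (surprisal_at l i)"
    and "(\<integral>z. surprisal_at l i z \<partial>Darts l) = (if i \<in> C then Hdot (p i * l) * prPhi0 C p \<phi> l i else 0)"
proof -
  define K where "K u b = - log 2 (cond_prob l u b i)" for u b
  have eq: "i \<in> C \<Longrightarrow> surprisal_at l i = (\<lambda>z. K (Ypre \<phi> z i) (0 < z i \<or> \<phi> (Ypre \<phi> z i)))"
    by (simp add: surprisal_at_def K_def fun_eq_iff)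
  have mean: "cond_mean l i K w = (if \<phi> w then 0 else Hdot (p i * l))" if "i \<in> C" for w
    using binary_entropy_exp_eq_Hdot[of "p i * l"] size_pos[OF that] assms
    by (simp add: cond_mean_def cond_prob_def K_def miss_def)
  show "integrable (Darts l) (surprisal_at l i)"
    using integral_next_cell(1)[OF assms] eq by (cases "i \<in> C") (simp_all add: surprisal_at_def[abs_def])
  show "(\<integral>z. surprisal_at l i z \<partial>Darts l) = (if i \<in> C then Hdot (p i * l) * prPhi0 C p \<phi> l i else 0)"
    using integral_next_cell_const[OF assms _ mean] eq by (cases "i \<in> C") (simp_all add: surprisal_at_def)
qed

lemma integrable_score_at:
  assumes "0 < l"
  shows "integrable (Darts l) (score_at l i)"
  using integral_next_cell(1)[OF assms, of i "cell_score l i"]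
  by (cases "i \<in> C") (simp_all add: score_at_def[abs_def])

definition score_variance :: "real \<Rightarrow> nat \<Rightarrow> real" where
  "score_variance l i = (if i \<in> C then prPhi0 C p \<phi> l i * ((p i)\<^sup>2 / (exp (p i * l) - 1)) else 0)"

lemma integral_score_at_sq:
  assumes "0 < l"
  shows "integrable (Darts l) (\<lambda>z. (score_at l i z)\<^sup>2)"
    and "(\<integral>z. (score_at l i z)\<^sup>2 \<partial>Darts l) = score_variance l i"
proof -
  define K where "K u b = (cell_score l i u b)\<^sup>2" for u b
  have eq: "i \<in> C \<Longrightarrow> (\<lambda>z. (score_at l i z)\<^sup>2) = (\<lambda>z. K (Ypre \<phi> z i) (0 < z i \<or> \<phi> (Ypre \<phi> z i)))"
    by (simp add: score_at_def K_def fun_eq_iff)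
  have mean: "cond_mean l i K w = (if \<phi> w then 0 else (p i)\<^sup>2 / (exp (p i * l) - 1))" if "i \<in> C" for w
    using one_minus_exp_minus_mult_sq[of "p i * l" "p i"] size_pos[OF that] assms
    by (simp add: cond_mean_def cond_prob_def K_def cell_score_def hit_score_def miss_def)
  show "integrable (Darts l) (\<lambda>z. (score_at l i z)\<^sup>2)"
    using integral_next_cell(1)[OF assms] eq by (cases "i \<in> C") (simp_all add: score_at_def[abs_def])
  show "(\<integral>z. (score_at l i z)\<^sup>2 \<partial>Darts l) = score_variance l i"
    using integral_next_cell_const[OF assms _ mean] eq
    by (cases "i \<in> C") (simp_all add: score_at_def score_variance_def mult.commute)
qed

lemma cond_mean_cell_score:
  "0 < l \<Longrightarrow> i \<in> C \<Longrightarrow> cond_mean l i (cell_score l i) w = 0"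
  using miss_hit_score[of l i] by (simp add: cond_mean_def cond_prob_def cell_score_def)

lemma cond_mean_abs_cell_score:
  assumes "0 < l" "i \<in> C"
  shows "cond_mean l i (\<lambda>u b. \<bar>cell_score l i u b\<bar>) w = (if \<phi> w then 0 else 2 * (miss l i * p i))"
  using miss_hit_score[OF assms] hit_score_pos[OF assms] size_pos[OF assms(2)] miss_less_1[OF assms]
  by (simp add: cond_mean_def cond_prob_def cell_score_def)

lemma cond_mean_abs_cell_score_le:
  assumes "0 < l" "i \<in> C"
  shows "cond_mean l i (\<lambda>u b. \<bar>cell_score l i u b\<bar>) w \<le> 2 * p i"
  using cond_mean_abs_cell_score[OF assms] miss_le_1[of l i] size_pos[OF assms(2)] assms
  by (simp add: mult_left_le_one_le)

lemma cond_mean_mult_left: "cond_mean l j (\<lambda>u b. G u * K u b) w = G w * cond_mean l j K w"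
  by (simp add: cond_mean_def algebra_simps)

lemma integral_abs_score_at:
  assumes "0 < l"
  shows "integrable (Darts l) (\<lambda>z. \<bar>score_at l i z\<bar>)"
    and "(\<integral>z. \<bar>score_at l i z\<bar> \<partial>Darts l) \<le> 2 * cell_size i"
proof -
  define K where "K u b = \<bar>cell_score l i u b\<bar>" for u b
  have eq: "i \<in> C \<Longrightarrow> (\<lambda>z. \<bar>score_at l i z\<bar>) = (\<lambda>z. K (Ypre \<phi> z i) (0 < z i \<or> \<phi> (Ypre \<phi> z i)))"
    by (simp add: score_at_def K_def fun_eq_iff)
  show "integrable (Darts l) (\<lambda>z. \<bar>score_at l i z\<bar>)"
    using integral_next_cell(1)[OF assms] eq by (cases "i \<in> C") (simp_all add: score_at_def[abs_def])
  have "2 * (miss l i * p i) * prPhi0 C p \<phi> l i \<le> 2 * p i" if "i \<in> C"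
    using miss_le_1[of l i] miss_pos[of l i] size_pos[OF that] prPhi0_bounds[of l i] assms that
    by (simp add: mult_le_one mult.assoc)
  then show "(\<integral>z. \<bar>score_at l i z\<bar> \<partial>Darts l) \<le> 2 * cell_size i"
    using integral_next_cell_const[OF assms _ cond_mean_abs_cell_score[OF assms]] eq
    by (cases "i \<in> C") (simp_all add: score_at_def cell_size_def K_def)
qed

lemma score_at_eq_prefix:
  "i < j \<Longrightarrow> score_at l i z =
     (if i \<in> C then cell_score l i (take i (Ypre \<phi> z j)) (Ypre \<phi> z j ! i) else 0)"
  by (simp add: score_at_def Ypre_take Ypre_nth)

text \<open>The score terms form a martingale difference sequence: given the earlier cells, the
  score of cell \<open>j\<close> has mean zero.\<close>

lemma integral_score_at_mult:
  assumes "0 < l" "i < j"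
  shows "integrable (Darts l) (\<lambda>z. score_at l i z * score_at l j z)"
    and "(\<integral>z. score_at l i z * score_at l j z \<partial>Darts l) = 0"
proof -
  define G where "G u = (if i \<in> C then cell_score l i (take i u) (u ! i) else 0)" for u
  have eq: "j \<in> C \<Longrightarrow> (\<lambda>z. score_at l i z * score_at l j z) =
      (\<lambda>z. G (Ypre \<phi> z j) * cell_score l j (Ypre \<phi> z j) (0 < z j \<or> \<phi> (Ypre \<phi> z j)))"
    using assms(2) by (simp add: score_at_eq_prefix[of i j] score_at_def[of l j] G_def fun_eq_iff)
  have "integrable (Darts l) (\<lambda>z. score_at l i z * score_at l j z) \<and>
      (\<integral>z. score_at l i z * score_at l j z \<partial>Darts l) = 0"
  proof (cases "j \<in> C")
    case True
    note cell = integral_next_cell[OF assms(1) True, of "\<lambda>u b. G u * cell_score l j u b"]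
    show ?thesis
      using cell unfolding eq[OF True] cond_mean_mult_left cond_mean_cell_score[OF assms(1) True]
      by simp
  qed (simp add: score_at_def)
  then show "integrable (Darts l) (\<lambda>z. score_at l i z * score_at l j z)"
    and "(\<integral>z. score_at l i z * score_at l j z \<partial>Darts l) = 0" by auto
qed

lemma integral_abs_score_at_mult:
  assumes "0 < l" "i < j"
  shows "integrable (Darts l) (\<lambda>z. \<bar>score_at l i z * score_at l j z\<bar>)"
    and "(\<integral>z. \<bar>score_at l i z * score_at l j z\<bar> \<partial>Darts l) \<le> 4 * cell_size i * cell_size j"
proof -
  define G where "G u = \<bar>if i \<in> C then cell_score l i (take i u) (u ! i) else 0\<bar>" for u
  define K where "K u b = \<bar>cell_score l j u b\<bar>" for u b
  have eq: "j \<in> C \<Longrightarrow> (\<lambda>z. \<bar>score_at l i z * score_at l j z\<bar>) =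
      (\<lambda>z. G (Ypre \<phi> z j) * K (Ypre \<phi> z j) (0 < z j \<or> \<phi> (Ypre \<phi> z j)))"
    using assms(2)
    by (simp add: score_at_eq_prefix[of i j] score_at_def[of l j] G_def K_def fun_eq_iff abs_mult)
  have G_eq: "G (Ypre \<phi> z j) = \<bar>score_at l i z\<bar>" for z
    using score_at_eq_prefix[OF assms(2)] by (simp add: G_def)
  have "integrable (Darts l) (\<lambda>z. \<bar>score_at l i z * score_at l j z\<bar>) \<and>
      (\<integral>z. \<bar>score_at l i z * score_at l j z\<bar> \<partial>Darts l) \<le> 4 * cell_size i * cell_size j"
  proof (cases "j \<in> C")
    case True
    note cell = integral_next_cell[OF assms(1) True, of "\<lambda>u b. G u * K u b"]
    have "(\<integral>z. G (Ypre \<phi> z j) * cond_mean l j K (Ypre \<phi> z j) \<partial>Darts l) \<le>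
        (\<integral>z. \<bar>score_at l i z\<bar> * (2 * p j) \<partial>Darts l)"
    proof (rule integral_mono)
      show "integrable (Darts l) (\<lambda>z. G (Ypre \<phi> z j) * cond_mean l j K (Ypre \<phi> z j))"
        by (rule integral_prefix_fun(1)[OF assms(1) cells_below_cell[OF True]])
      show "integrable (Darts l) (\<lambda>z. \<bar>score_at l i z\<bar> * (2 * p j))"
        using integral_abs_score_at(1)[OF assms(1)] by simp
      show "G (Ypre \<phi> z j) * cond_mean l j K (Ypre \<phi> z j) \<le> \<bar>score_at l i z\<bar> * (2 * p j)" for z
        unfolding G_eq K_def using cond_mean_abs_cell_score_le[OF assms(1) True]
        by (intro mult_left_mono) auto
    qed
    also have "\<dots> \<le> 2 * cell_size i * (2 * p j)"
      using integral_abs_score_at(2)[OF assms(1), of i] size_pos[OF True] by simp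
    finally show ?thesis
      using cell unfolding eq[OF True] cond_mean_mult_left by (simp add: cell_size_def True)
  qed (simp add: score_at_def cell_size_nonneg)
  then show "integrable (Darts l) (\<lambda>z. \<bar>score_at l i z * score_at l j z\<bar>)"
    and "(\<integral>z. \<bar>score_at l i z * score_at l j z\<bar> \<partial>Darts l) \<le> 4 * cell_size i * cell_size j"
    by auto
qed

section \<open>The law of the state\<close>

text \<open>A state \<open>y\<close> has positive probability iff it is \<open>feasible\<close>: it vanishes off the cells,
  every cell whose \<open>\<phi>\<close> already fires is occupied, and only finitely many cells are occupied
  freely, i.e.\ without \<open>\<phi>\<close> firing. Its probability is then the product over the free cells,
  \<open>\<Prod>\<^bsub>free hits\<^esub> (1 - exp (- p i * l)) \<cdot> exp (- l \<cdot> \<Sum>\<^bsub>free misses\<^esub> p i)\<close>.\<close>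

definition free_hits :: "(nat \<Rightarrow> bool) \<Rightarrow> nat set" where
  "free_hits y = {i \<in> C. \<not> \<phi> (seq_prefix y i) \<and> y i}"

definition free_misses :: "(nat \<Rightarrow> bool) \<Rightarrow> nat set" where
  "free_misses y = {i \<in> C. \<not> \<phi> (seq_prefix y i) \<and> \<not> y i}"

definition feasible :: "(nat \<Rightarrow> bool) \<Rightarrow> bool" where
  "feasible y \<longleftrightarrow> (\<forall>i. i \<notin> C \<longrightarrow> \<not> y i) \<and> (\<forall>i\<in>C. \<phi> (seq_prefix y i) \<longrightarrow> y i) \<and> finite (free_hits y)"

definition missed_size :: "(nat \<Rightarrow> bool) \<Rightarrow> nat \<Rightarrow> real" where
  "missed_size y i = (if i \<in> free_misses y then p i else 0)"

definition log_pmf_term :: "real \<Rightarrow> (nat \<Rightarrow> bool) \<Rightarrow> nat \<Rightarrow> real" where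
  "log_pmf_term l y i = (if i \<in> free_hits y then ln (1 - miss l i) else 0) - l * missed_size y i"

definition log_pmf :: "real \<Rightarrow> (nat \<Rightarrow> bool) \<Rightarrow> real" where
  "log_pmf l y = (\<Sum>i\<in>free_hits y. ln (1 - miss l i)) - l * suminf (missed_size y)"

definition state_score :: "real \<Rightarrow> (nat \<Rightarrow> bool) \<Rightarrow> real" where
  "state_score l y = (\<Sum>i\<in>free_hits y. hit_score l i) - suminf (missed_size y)"

lemma missed_size_bounds: "0 \<le> missed_size y i" "missed_size y i \<le> cell_size i"
  using size_pos by (auto simp: missed_size_def free_misses_def cell_size_def less_imp_le)

lemma summable_missed_size: "summable (missed_size y)"
  by (rule summable_comparison_test[OF _ summable_cell_size]) (use missed_size_bounds in auto)

lemma log_pmf_term_sums: "finite (free_hits y) \<Longrightarrow> log_pmf_term l y sums log_pmf l y"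
  unfolding log_pmf_term_def log_pmf_def
  by (intro sums_diff sums_If_finite_set sums_mult summable_sums summable_missed_size)

lemma prefix_prob_seq_prefix:
  "prefix_prob l (seq_prefix y n) = (\<Prod>i<n. cond_prob l (seq_prefix y i) (y i) i)"
  unfolding prefix_prob_def by (intro prod.cong) (auto simp: take_seq_prefix seq_prefix_nth)

lemma prefix_prob_seq_prefix_exp:
  assumes "0 < l" "cells_below n" "\<And>i. i < n \<Longrightarrow> \<phi> (seq_prefix y i) \<Longrightarrow> y i"
  shows "prefix_prob l (seq_prefix y n) = exp (\<Sum>i<n. log_pmf_term l y i)"
proof -
  have "cond_prob l (seq_prefix y i) (y i) i = exp (log_pmf_term l y i)" if "i < n" for i
  proof -
    have "i \<in> C" using assms(2) that by (auto simp: cells_below_def)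
    then show ?thesis
      using assms(3)[OF that] miss_less_1[OF assms(1)]
      by (auto simp: cond_prob_def log_pmf_term_def free_hits_def missed_size_def free_misses_def
          miss_def)
  qed
  then show ?thesis by (simp add: prefix_prob_seq_prefix exp_sum)
qed

lemma prefix_prob_seq_prefix_zero:
  assumes "i < n" "\<phi> (seq_prefix y i)" "\<not> y i"
  shows "prefix_prob l (seq_prefix y n) = 0"
  unfolding prefix_prob_seq_prefix using assms by (intro prod_zero) (auto simp: cond_prob_def)

lemma prefix_prob_free_hit_le:
  assumes "0 < l" "k \<in> free_hits y"
  shows "prefix_prob l (seq_prefix y (Suc k)) \<le> p k * l"
proof -
  have k: "k \<in> C" "\<not> \<phi> (seq_prefix y k)" "y k" using assms(2) by (auto simp: free_hits_def)
  have "prefix_prob l (seq_prefix y (Suc k)) = prefix_prob l (seq_prefix y k) * (1 - miss l k)"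
    unfolding seq_prefix_Suc prefix_prob_snoc using k by (simp add: cond_prob_def)
  also have "\<dots> \<le> 1 - miss l k"
    using prefix_prob_le_1[of l "seq_prefix y k"] cells_below_cell[OF k(1)] miss_le_1[of l k] k
      assms(1)
    by (intro mult_left_le_one_le) (auto intro: prefix_prob_nonneg)
  also have "\<dots> \<le> p k * l" by (rule one_minus_miss_le)
  finally show ?thesis .
qed

definition state_event :: "real \<Rightarrow> (nat \<Rightarrow> bool) \<Rightarrow> (nat \<Rightarrow> nat) set" where
  "state_event l y = {z \<in> space (Darts l). Ystate C \<phi> z = y}"

lemma Ypmf_eq_measure: "Ypmf C p \<phi> l y = measure (Darts l) (state_event l y)"
  by (simp add: Ypmf_def state_event_def)

lemma seq_prefix_Ystate: "cells_below n \<Longrightarrow> seq_prefix (Ystate C \<phi> z) n = Ypre \<phi> z n"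
  by (rule nth_equalityI) (auto simp: cells_below_def seq_prefix_nth Ystate_def Ypre_nth_Suc)

lemma Ystate_eq_iff:
  assumes "\<And>i. i \<notin> C \<Longrightarrow> \<not> y i"
  shows "Ystate C \<phi> z = y \<longleftrightarrow> (\<forall>n. cells_below n \<longrightarrow> Ypre \<phi> z n = seq_prefix y n)"
proof
  assume "Ystate C \<phi> z = y"
  then show "\<forall>n. cells_below n \<longrightarrow> Ypre \<phi> z n = seq_prefix y n"
    using seq_prefix_Ystate by metis
next
  assume h: "\<forall>n. cells_below n \<longrightarrow> Ypre \<phi> z n = seq_prefix y n"
  show "Ystate C \<phi> z = y"
  proof
    fix i show "Ystate C \<phi> z i = y i"
    proof (cases "i \<in> C")
      case True
      then have "Ypre \<phi> z (Suc i) = seq_prefix y (Suc i)" using h cells_below_Suc by blast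
      then show ?thesis using True by (simp add: Ystate_def seq_prefix_nth del: Ypre.simps)
    qed (simp add: Ystate_def assms)
  qed
qed

lemma state_event_eq_INT:
  assumes "\<And>i. i \<notin> C \<Longrightarrow> \<not> y i"
  shows "state_event l y = (\<Inter>n\<in>{n. cells_below n}. prefix_event l n (seq_prefix y n))"
proof -
  have "cells_below 0" by (simp add: cells_below_def)
  then show ?thesis
    using Ystate_eq_iff[OF assms] by (auto simp: state_event_def prefix_event_def)
qed

lemma state_event_sets:
  assumes "\<And>i. i \<notin> C \<Longrightarrow> \<not> y i"
  shows "state_event l y \<in> sets (Darts l)"
proof -
  have "cells_below 0" by (simp add: cells_below_def)
  then have "(\<Inter>n\<in>{n. cells_below n}. prefix_event l n (seq_prefix y n)) \<in> sets (Darts l)"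
    by (intro sets.countable_INT) (auto simp: prefix_event_sets)
  then show ?thesis using state_event_eq_INT[of y l, OF assms] by simp
qed

lemma Ypmf_le_prefix_prob:
  assumes "0 < l" "cells_below n"
  shows "Ypmf C p \<phi> l y \<le> prefix_prob l (seq_prefix y n)"
proof (cases "\<forall>i. i \<notin> C \<longrightarrow> \<not> y i")
  case True
  interpret P: prob_space "Darts l" by (rule prob_space_Darts)
  have "state_event l y \<subseteq> prefix_event l n (seq_prefix y n)"
    using assms(2) state_event_eq_INT[of y l] True by blast
  then have "Ypmf C p \<phi> l y \<le> measure (Darts l) (prefix_event l n (seq_prefix y n))"
    unfolding Ypmf_eq_measure by (intro P.finite_measure_mono prefix_event_sets assms) simp_all
  then show ?thesis using measure_prefix_event[OF assms] by simp
next
  case False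
  then obtain i where "i \<notin> C" "y i" by blast
  then have "state_event l y = {}" by (auto simp: state_event_def Ystate_def)
  then show ?thesis
    using prefix_prob_nonneg[of l "seq_prefix y n"] assms by (simp add: Ypmf_eq_measure)
qed

lemma Ypmf_infinite_free_hits:
  assumes "0 < l" "infinite (free_hits y)"
  shows "Ypmf C p \<phi> l y = 0"
proof (rule ccontr)
  assume "Ypmf C p \<phi> l y \<noteq> 0"
  then have "0 < Ypmf C p \<phi> l y / l"
    using Ypmf_eq_measure[of l y] assms(1) by (simp add: order_le_neq_trans)
  moreover have "cell_size \<longlonglongrightarrow> 0"
    using summable_cell_size by (rule summable_LIMSEQ_zero)
  ultimately have "eventually (\<lambda>k. cell_size k < Ypmf C p \<phi> l y / l) sequentially"
    by (rule order_tendstoD(2)[rotated])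
  then obtain K where K: "\<And>k. K \<le> k \<Longrightarrow> cell_size k < Ypmf C p \<phi> l y / l"
    by (auto simp: eventually_sequentially)
  obtain k where k: "k \<in> free_hits y" "K \<le> k"
    using assms(2) by (metis infinite_nat_iff_unbounded_le)
  then have kC: "k \<in> C" by (simp add: free_hits_def)
  have "Ypmf C p \<phi> l y \<le> prefix_prob l (seq_prefix y (Suc k))"
    by (rule Ypmf_le_prefix_prob[OF assms(1) cells_below_Suc[OF kC]])
  also have "\<dots> \<le> p k * l" by (rule prefix_prob_free_hit_le[OF assms(1) k(1)])
  also have "\<dots> < Ypmf C p \<phi> l y"
    using K[OF k(2)] kC assms(1) by (simp add: cell_size_def field_simps)
  finally show False by simp
qed

lemma Ypmf_infeasible:
  assumes "0 < l" "\<not> feasible y"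
  shows "Ypmf C p \<phi> l y = 0"
proof -
  consider (off) i where "i \<notin> C" "y i" | (forced) i where "i \<in> C" "\<phi> (seq_prefix y i)" "\<not> y i"
    | (infinite) "infinite (free_hits y)"
    using assms(2) unfolding feasible_def by blast
  then show ?thesis
  proof cases
    case off
    then have "state_event l y = {}" by (auto simp: state_event_def Ystate_def)
    then show ?thesis by (simp add: Ypmf_eq_measure)
  next
    case forced
    have "Ypmf C p \<phi> l y \<le> prefix_prob l (seq_prefix y (Suc i))"
      by (rule Ypmf_le_prefix_prob[OF assms(1) cells_below_Suc[OF forced(1)]])
    also have "\<dots> = 0" using prefix_prob_seq_prefix_zero[of i "Suc i"] forced by simp
    finally show ?thesis
      using measure_nonneg[of "Darts l" "state_event l y"] by (simp add: Ypmf_eq_measure)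
  next
    case infinite
    then show ?thesis by (rule Ypmf_infinite_free_hits[OF assms(1)])
  qed
qed

lemma prefix_event_seq_prefix_antimono:
  assumes "n \<le> m"
  shows "prefix_event l m (seq_prefix y m) \<subseteq> prefix_event l n (seq_prefix y n)"
proof
  fix z assume "z \<in> prefix_event l m (seq_prefix y m)"
  then have "z \<in> space (Darts l)" "Ypre \<phi> z m = seq_prefix y m" by (simp_all add: prefix_event_def)
  moreover have "Ypre \<phi> z n = take n (Ypre \<phi> z m)" by (simp add: Ypre_take assms)
  ultimately show "z \<in> prefix_event l n (seq_prefix y n)"
    by (simp add: prefix_event_def take_seq_prefix assms)
qed

lemma state_event_finite_cells:
  assumes "C = {..<N}" "\<And>i. i \<notin> C \<Longrightarrow> \<not> y i"
  shows "state_event l y = prefix_event l N (seq_prefix y N)"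
proof -
  have below_iff: "cells_below n \<longleftrightarrow> n \<le> N" for n
    unfolding cells_below_def by (simp add: assms(1))
  have "(\<Inter>n\<in>{n. n \<le> N}. prefix_event l n (seq_prefix y n)) = prefix_event l N (seq_prefix y N)"
    using prefix_event_seq_prefix_antimono[of _ N l y] by (intro antisym INT_greatest INT_lower) auto
  then show ?thesis using state_event_eq_INT[of y l, OF assms(2)] by (simp add: below_iff)
qed

lemma Ypmf_feasible:
  assumes "0 < l" "feasible y"
  shows "Ypmf C p \<phi> l y = exp (log_pmf l y)"
proof -
  interpret P: prob_space "Darts l" by (rule prob_space_Darts)
  have off: "\<And>i. i \<notin> C \<Longrightarrow> \<not> y i" and forced: "\<And>i. i \<in> C \<Longrightarrow> \<phi> (seq_prefix y i) \<Longrightarrow> y i"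
    and sums: "log_pmf_term l y sums log_pmf l y"
    using assms(2) log_pmf_term_sums by (auto simp: feasible_def)
  have prefix: "measure (Darts l) (prefix_event l n (seq_prefix y n)) = exp (\<Sum>i<n. log_pmf_term l y i)"
    if "cells_below n" for n
  proof -
    have "prefix_prob l (seq_prefix y n) = exp (\<Sum>i<n. log_pmf_term l y i)"
      using that by (intro prefix_prob_seq_prefix_exp[OF assms(1)]) (auto simp: cells_below_def forced)
    then show ?thesis using measure_prefix_event[OF assms(1) that] by simp
  qed
  from cells_cases show ?thesis
  proof
    assume "\<exists>N. C = {..<N}"
    then obtain N where N: "C = {..<N}" by blast
    have "log_pmf_term l y sums (\<Sum>i<N. log_pmf_term l y i)"
      by (rule sums_finite)
         (auto simp: N[symmetric] log_pmf_term_def free_hits_def missed_size_def free_misses_def,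
          simp add: N)
    moreover have "cells_below N" unfolding cells_below_def by (simp add: N)
    ultimately show ?thesis
      using prefix sums_unique2[OF sums] state_event_finite_cells[OF N off]
      by (simp add: Ypmf_eq_measure)
  next
    assume U: "C = UNIV"
    have below: "cells_below n" for n unfolding cells_below_def by (simp add: U)
    have "(\<lambda>n. measure (Darts l) (prefix_event l n (seq_prefix y n))) \<longlonglongrightarrow>
        measure (Darts l) (\<Inter>n. prefix_event l n (seq_prefix y n))"
      using prefix_event_seq_prefix_antimono
      by (intro P.finite_Lim_measure_decseq) (auto simp: prefix_event_sets below decseq_def)
    moreover have "state_event l y = (\<Inter>n. prefix_event l n (seq_prefix y n))"
      using state_event_eq_INT[of y l, OF off] below by simp
    ultimately have "(\<lambda>n. exp (\<Sum>i<n. log_pmf_term l y i)) \<longlonglongrightarrow> Ypmf C p \<phi> l y"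
      by (simp add: Ypmf_eq_measure prefix[OF below])
    moreover have "(\<lambda>n. exp (\<Sum>i<n. log_pmf_term l y i)) \<longlonglongrightarrow> exp (log_pmf l y)"
      using sums unfolding sums_def by (rule tendsto_exp)
    ultimately show ?thesis by (rule LIMSEQ_unique)
  qed
qed

lemma Ypmf_eq: "0 < l \<Longrightarrow> Ypmf C p \<phi> l y = (if feasible y then exp (log_pmf l y) else 0)"
  using Ypmf_feasible Ypmf_infeasible by simp

lemma Ypmf_pos_iff: "0 < l \<Longrightarrow> 0 < Ypmf C p \<phi> l y \<longleftrightarrow> feasible y"
  by (simp add: Ypmf_eq)

lemma Ystate_cell: "i \<in> C \<Longrightarrow> Ystate C \<phi> z i = (0 < z i \<or> \<phi> (Ypre \<phi> z i))"
  by (simp add: Ystate_def nth_append)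

lemma Ypre_eq_seq_prefix_Ystate: "i \<in> C \<Longrightarrow> Ypre \<phi> z i = seq_prefix (Ystate C \<phi> z) i"
  using seq_prefix_Ystate[OF cells_below_cell] by simp

lemma surprisal_at_eq:
  assumes "0 < l"
  shows "surprisal_at l i z = - log_pmf_term l (Ystate C \<phi> z) i / ln 2"
proof (cases "i \<in> C")
  case True
  then show ?thesis
    using miss_less_1[OF assms True] miss_pos[of l i]
    by (auto simp: surprisal_at_def log_pmf_term_def free_hits_def missed_size_def free_misses_def
        cond_prob_def log_def miss_def Ypre_eq_seq_prefix_Ystate[symmetric] Ystate_cell)
qed (simp add: surprisal_at_def log_pmf_term_def free_hits_def missed_size_def free_misses_def)

lemma score_at_eq:
  "score_at l i z =
     (if i \<in> free_hits (Ystate C \<phi> z) then hit_score l i else 0) - missed_size (Ystate C \<phi> z) i"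
  by (cases "i \<in> C")
     (auto simp: score_at_def cell_score_def free_hits_def missed_size_def free_misses_def
       Ypre_eq_seq_prefix_Ystate[symmetric] Ystate_cell)

lemma surprisal_at_sums:
  "0 < l \<Longrightarrow> finite (free_hits (Ystate C \<phi> z)) \<Longrightarrow>
    (\<lambda>i. surprisal_at l i z) sums (- log_pmf l (Ystate C \<phi> z) / ln 2)"
  unfolding surprisal_at_eq by (intro sums_divide sums_minus log_pmf_term_sums)

lemma score_at_sums:
  "finite (free_hits (Ystate C \<phi> z)) \<Longrightarrow> (\<lambda>i. score_at l i z) sums state_score l (Ystate C \<phi> z)"
  unfolding score_at_eq state_score_def
  by (intro sums_diff sums_If_finite_set summable_sums summable_missed_size)

lemma summable_abs_score_at:
  assumes "finite (free_hits (Ystate C \<phi> z))"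
  shows "summable (\<lambda>i. \<bar>score_at l i z\<bar>)"
proof (rule summable_comparison_test)
  let ?y = "Ystate C \<phi> z"
  show "summable (\<lambda>i. (if i \<in> free_hits ?y then \<bar>hit_score l i\<bar> else 0) + missed_size ?y i)"
    using assms by (intro summable_add summable_If_finite_set summable_missed_size)
  have "\<bar>score_at l n z\<bar> \<le> (if n \<in> free_hits ?y then \<bar>hit_score l n\<bar> else 0) + missed_size ?y n"
    for n
    using abs_triangle_ineq4[of "hit_score l n" "missed_size ?y n"] missed_size_bounds(1)[of ?y n]
    by (simp add: score_at_eq)
  then show "\<exists>N. \<forall>n\<ge>N. norm \<bar>score_at l n z\<bar> \<le>
      (if n \<in> free_hits ?y then \<bar>hit_score l n\<bar> else 0) + missed_size ?y n"
    by simp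
qed

lemma feasible_Ystate:
  assumes "finite {i \<in> C. 0 < z i}"
  shows "feasible (Ystate C \<phi> z)"
proof -
  have "free_hits (Ystate C \<phi> z) \<subseteq> {i \<in> C. 0 < z i}"
    by (auto simp: free_hits_def Ystate_cell Ypre_eq_seq_prefix_Ystate)
  then show ?thesis
    using finite_subset[OF _ assms]
    by (auto simp: feasible_def Ystate_cell Ypre_eq_seq_prefix_Ystate[symmetric]) (simp add: Ystate_def)
qed

text \<open>Borel--Cantelli: the probabilities \<open>1 - exp (- p i * l) \<le> p i * l\<close> of hitting the cells are
  summable, so almost surely only finitely many cells are hit.\<close>

lemma AE_finite_hits:
  assumes "0 < l"
  shows "AE z in Darts l. finite {i \<in> C. 0 < z i}"
proof -
  interpret P: prob_space "Darts l" by (rule prob_space_Darts)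
  define H where "H i = {z \<in> space (Darts l). i \<in> C \<and> 0 < z i}" for i
  have H_emb: "H i = prod_emb C (cell_law l) {i} (PiE {i} (\<lambda>_. {k. 0 < k}))" if "i \<in> C" for i
    using that unfolding H_def prod_emb_def by (auto simp: Darts_eq_PiM restrict_PiE_iff space_PiM)
  have H_sets: "H i \<in> sets (Darts l)" for i
    by (cases "i \<in> C") (simp_all add: H_emb Darts_eq_PiM sets_PiM_I_finite, simp add: H_def)
  have "measure (Darts l) (H i) \<le> l * cell_size i" for i
  proof (cases "i \<in> C")
    case True
    have "emeasure (Darts l) (H i) = emeasure (cell_law l i) {k. 0 < k}"
      unfolding H_emb[OF True] Darts_eq_PiM
      by (subst emeasure_PiM_emb) (auto simp: True prob_space_measure_pmf)
    then have "measure (Darts l) (H i) = 1 - miss l i"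
      using measure_cell_hit[OF assms True] by (simp add: measure_def)
    then show ?thesis using one_minus_miss_le[of l i] True by (simp add: cell_size_def mult.commute)
  qed (simp add: H_def cell_size_def)
  then have "summable (\<lambda>i. measure (Darts l) (H i))"
    by (intro summable_comparison_test[OF _ summable_mult[OF summable_cell_size, of l]])
       (auto simp: measure_nonneg)
  then have "AE z in Darts l. eventually (\<lambda>i. z \<in> space (Darts l) - H i) sequentially"
    by (intro borel_cantelli_AE1[OF H_sets]) (simp_all add: P.emeasure_finite less_top[symmetric])
  moreover have "AE z in Darts l. z \<in> space (Darts l)" by (rule AE_space)
  ultimately show ?thesis
  proof eventually_elim
    case (elim z)
    then obtain N where "\<And>i. N \<le> i \<Longrightarrow> z \<notin> H i" by (auto simp: eventually_sequentially)
    then have "{i \<in> C. 0 < z i} \<subseteq> {..<N}"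
      using elim(2) by (force simp: H_def not_less[symmetric])
    then show ?case by (rule finite_subset) simp
  qed
qed

lemma AE_feasible:
  assumes "0 < l"
  shows "AE z in Darts l. feasible (Ystate C \<phi> z)"
  using AE_finite_hits[OF assms] by (rule eventually_mono) (rule feasible_Ystate)

text \<open>A feasible state is the state of the dart configuration that hits exactly its free cells
  once each, so feasible states are indexed by finite sets.\<close>

lemma countable_feasible: "countable {y. feasible y}"
proof -
  define F where "F T = Ystate C \<phi> (restrict (\<lambda>i. if i \<in> T then 1::nat else 0) C)" for T
  have "y \<in> F ` {T. finite T}" if "feasible y" for y
  proof
    define z where "z = restrict (\<lambda>i. if i \<in> free_hits y then 1::nat else 0) C"
    have off: "\<And>i. i \<notin> C \<Longrightarrow> \<not> y i" using that by (simp add: feasible_def)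
    have "Ypre \<phi> z n = seq_prefix y n" if "cells_below n" for n
      unfolding Ypre_eq_iff
    proof (intro conjI allI impI)
      fix i assume "i < n"
      then have "i \<in> C" using \<open>cells_below n\<close> by (auto simp: cells_below_def)
      moreover have "y i = (i \<in> free_hits y \<or> \<phi> (seq_prefix y i))"
        using \<open>feasible y\<close> \<open>i \<in> C\<close> by (auto simp: feasible_def free_hits_def)
      ultimately show "seq_prefix y n ! i = (0 < z i \<or> \<phi> (take i (seq_prefix y n)))"
        using \<open>i < n\<close> by (simp add: seq_prefix_nth take_seq_prefix z_def)
    qed simp
    then have "Ystate C \<phi> z = y" using Ystate_eq_iff[of y z] off by blast
    then show "y = F (free_hits y)" by (simp add: F_def z_def)
    show "free_hits y \<in> {T. finite T}" using that by (simp add: feasible_def)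
  qed
  then have "{y. feasible y} \<subseteq> F ` {T. finite T}" by blast
  moreover have "countable (F ` {T. finite T})"
    by (intro countable_image countable_Collect_finite)
  ultimately show ?thesis by (rule countable_subset)
qed

lemma nn_integral_Ypmf:
  fixes g :: "(nat \<Rightarrow> bool) \<Rightarrow> ennreal"
  assumes "0 < l"
  shows "(\<integral>\<^sup>+y. ennreal (Ypmf C p \<phi> l y) * g y \<partial>count_space {y. feasible y}) =
    (\<integral>\<^sup>+z. g (Ystate C \<phi> z) \<partial>Darts l)"
proof -
  interpret P: prob_space "Darts l" by (rule prob_space_Darts)
  have sets: "state_event l y \<in> sets (Darts l)" if "feasible y" for y
    using that by (intro state_event_sets) (simp add: feasible_def)
  have "(\<integral>\<^sup>+y. ennreal (Ypmf C p \<phi> l y) * g y \<partial>count_space {y. feasible y}) =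
      (\<integral>\<^sup>+y. (\<integral>\<^sup>+z. g y * indicator (state_event l y) z \<partial>Darts l) \<partial>count_space {y. feasible y})"
    using sets
    by (intro nn_integral_cong)
       (simp add: nn_integral_cmult_indicator Ypmf_eq_measure P.emeasure_eq_measure mult.commute)
  also have "\<dots> = (\<integral>\<^sup>+z. (\<integral>\<^sup>+y. g y * indicator (state_event l y) z \<partial>count_space {y. feasible y}) \<partial>Darts l)"
    using countable_feasible sets by (intro nn_integral_count_space_nn_integral[symmetric]) auto
  also have "\<dots> = (\<integral>\<^sup>+z. g (Ystate C \<phi> z) \<partial>Darts l)"
  proof (rule nn_integral_cong_AE)
    show "AE z in Darts l.
        (\<integral>\<^sup>+y. g y * indicator (state_event l y) z \<partial>count_space {y. feasible y}) = g (Ystate C \<phi> z)"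
      using AE_feasible[OF assms] AE_space
    proof eventually_elim
      case (elim z)
      have "(\<integral>\<^sup>+y. g y * indicator (state_event l y) z \<partial>count_space {y. feasible y}) =
          (\<Sum>y\<in>{Ystate C \<phi> z}. g y * indicator (state_event l y) z)"
        using elim by (intro nn_integral_count_space') (auto simp: state_event_def)
      then show ?case using elim by (simp add: state_event_def)
    qed
  qed
  finally show ?thesis .
qed

lemma has_field_derivative_ln_one_minus_miss:
  assumes "0 < l" "i \<in> C"
  shows "((\<lambda>x. ln (1 - miss x i)) has_field_derivative hit_score l i) (at l)"
proof -
  have "miss l i < 1" using miss_less_1[OF assms] .
  then have "((\<lambda>x. ln (1 - exp (- (p i * x)))) has_field_derivative
      (p i * miss l i) / (1 - miss l i)) (at l)"
    by (auto intro!: derivative_eq_intros simp: miss_def)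
  moreover have "(p i * miss l i) / (1 - miss l i) = hit_score l i"
    using miss_hit_score[OF assms] \<open>miss l i < 1\<close> by (simp add: field_simps)
  ultimately show ?thesis by (simp add: miss_def)
qed

lemma has_field_derivative_log_pmf:
  assumes "0 < l" "finite (free_hits y)"
  shows "((\<lambda>x. log_pmf x y) has_field_derivative state_score l y) (at l)"
  unfolding log_pmf_def[abs_def] state_score_def
  by (rule derivative_eq_intros has_field_derivative_ln_one_minus_miss assms | simp add: free_hits_def)+

lemma deriv_Ypmf:
  assumes "0 < l" "feasible y"
  shows "deriv (\<lambda>x. Ypmf C p \<phi> x y) l = Ypmf C p \<phi> l y * state_score l y"
proof -
  have "((\<lambda>x. exp (log_pmf x y)) has_field_derivative exp (log_pmf l y) * state_score l y) (at l)"
    using assms(2) by (intro DERIV_chain2[OF DERIV_exp has_field_derivative_log_pmf[OF assms(1)]])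
      (simp add: feasible_def)
  then have "((\<lambda>x. Ypmf C p \<phi> x y) has_field_derivative exp (log_pmf l y) * state_score l y) (at l)"
    by (rule has_field_derivative_transform_within_open[where S="{0<..}"])
       (use assms Ypmf_feasible in auto)
  then show ?thesis using Ypmf_feasible[OF assms] by (simp add: DERIV_imp_deriv)
qed

section \<open>Entropy\<close>

lemma entropyY_eq_nn_integral:
  assumes "0 < l"
  shows "entropyY C p \<phi> l = (\<integral>\<^sup>+z. ennreal (- log 2 (Ypmf C p \<phi> l (Ystate C \<phi> z))) \<partial>Darts l)"
proof -
  let ?P = "Ypmf C p \<phi> l"
  have "entropyY C p \<phi> l = (\<integral>\<^sup>+y. ennreal (- ?P y * log 2 (?P y)) \<partial>count_space {y. feasible y})"
    unfolding entropyY_def Ypmf_pos_iff[OF assms] by (rule infsum_ennreal_eq_nn_integral[OF countable_feasible])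
  also have "\<dots> = (\<integral>\<^sup>+y. ennreal (?P y) * ennreal (- log 2 (?P y)) \<partial>count_space {y. feasible y})"
  proof (rule nn_integral_cong)
    fix y assume "y \<in> space (count_space {y. feasible y})"
    then have "0 < ?P y" using Ypmf_pos_iff[OF assms] by simp
    moreover have "?P y \<le> 1"
      unfolding Ypmf_eq_measure by (rule prob_space.prob_le_1[OF prob_space_Darts])
    ultimately show "ennreal (- ?P y * log 2 (?P y)) = ennreal (?P y) * ennreal (- log 2 (?P y))"
      by (simp add: ennreal_mult[symmetric])
  qed
  also have "\<dots> = (\<integral>\<^sup>+z. ennreal (- log 2 (?P (Ystate C \<phi> z))) \<partial>Darts l)"
    by (rule nn_integral_Ypmf[OF assms])
  finally show ?thesis .
qed

lemma entropyY_eq: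
  assumes "0 < l"
  shows "entropyY C p \<phi> l = (\<Sum>\<^sub>\<infinity>i\<in>C. ennreal (Hdot (p i * l) * prPhi0 C p \<phi> l i))"
proof -
  have "entropyY C p \<phi> l = (\<integral>\<^sup>+z. (\<Sum>i. ennreal (surprisal_at l i z)) \<partial>Darts l)"
    unfolding entropyY_eq_nn_integral[OF assms]
  proof (rule nn_integral_cong_AE)
    show "AE z in Darts l. ennreal (- log 2 (Ypmf C p \<phi> l (Ystate C \<phi> z))) =
        (\<Sum>i. ennreal (surprisal_at l i z))"
      using AE_feasible[OF assms]
    proof eventually_elim
      case (elim z)
      then have "(\<lambda>i. surprisal_at l i z) sums (- log_pmf l (Ystate C \<phi> z) / ln 2)"
        by (intro surprisal_at_sums assms) (simp add: feasible_def)
      then show ?case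
        using surprisal_at_nonneg[of l] assms Ypmf_feasible[OF assms elim]
        by (simp add: suminf_ennreal2 sums_iff log_def)
    qed
  qed
  also have "\<dots> = (\<Sum>i. \<integral>\<^sup>+z. ennreal (surprisal_at l i z) \<partial>Darts l)"
    using borel_measurable_integrable[OF integral_surprisal_at(1)[OF assms]]
    by (intro nn_integral_suminf) measurable
  also have "\<dots> = (\<Sum>i. ennreal (if i \<in> C then Hdot (p i * l) * prPhi0 C p \<phi> l i else 0))"
    using surprisal_at_nonneg[of l] assms
    by (simp add: nn_integral_eq_integral integral_surprisal_at[OF assms] less_imp_le)
  also have "\<dots> = (\<Sum>\<^sub>\<infinity>i\<in>C. ennreal (Hdot (p i * l) * prPhi0 C p \<phi> l i))"
    unfolding infsum_ennreal_eq_suminf by (intro suminf_cong) simp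
  finally show ?thesis .
qed

section \<open>Fisher information\<close>

lemma score_variance_nonneg:
  assumes "0 < l"
  shows "0 \<le> score_variance l i"
proof (cases "i \<in> C")
  case True
  then have "0 < exp (p i * l) - 1" using size_pos[of i] assms by simp
  then show ?thesis using prPhi0_bounds(1)[of l i] by (simp add: score_variance_def)
qed (simp add: score_variance_def)

lemma score_variance_le: 
  assumes "0 < l"
  shows "score_variance l i \<le> cell_size i / l"
proof (cases "i \<in> C")
  case True
  have pl: "0 < p i * l" using size_pos[OF True] assms by simp
  have "p i * l \<le> exp (p i * l) - 1" using exp_ge_add_one_self[of "p i * l"] by linarith
  then have "(p i)\<^sup>2 / (exp (p i * l) - 1) \<le> (p i)\<^sup>2 / (p i * l)"
    using pl by (intro divide_left_mono) auto
  also have "\<dots> = p i / l" using pl by (simp add: power2_eq_square)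
  finally have "(p i)\<^sup>2 / (exp (p i * l) - 1) \<le> p i / l" .
  moreover have "0 \<le> (p i)\<^sup>2 / (exp (p i * l) - 1)" using pl by simp
  ultimately have "prPhi0 C p \<phi> l i * ((p i)\<^sup>2 / (exp (p i * l) - 1)) \<le> p i / l"
    using prPhi0_bounds[of l i] by (meson mult_left_le_one_le order_trans)
  then show ?thesis using True by (simp add: score_variance_def cell_size_def)
qed (simp add: score_variance_def cell_size_def)

lemma integral_score_at_mult_cases:
  assumes "0 < l"
  shows "integrable (Darts l) (\<lambda>z. score_at l i z * score_at l j z)"
    and "integrable (Darts l) (\<lambda>z. \<bar>score_at l i z * score_at l j z\<bar>)"
    and "(\<integral>z. score_at l i z * score_at l j z \<partial>Darts l) = (if j = i then score_variance l i else 0)"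
    and "(\<integral>z. \<bar>score_at l i z * score_at l j z\<bar> \<partial>Darts l) \<le>
      4 * cell_size i * cell_size j + (if j = i then cell_size i / l else 0)"
proof -
  have "integrable (Darts l) (\<lambda>z. score_at l i z * score_at l j z) \<and>
      integrable (Darts l) (\<lambda>z. \<bar>score_at l i z * score_at l j z\<bar>) \<and>
      (\<integral>z. score_at l i z * score_at l j z \<partial>Darts l) = (if j = i then score_variance l i else 0) \<and>
      (\<integral>z. \<bar>score_at l i z * score_at l j z\<bar> \<partial>Darts l) \<le>
        4 * cell_size i * cell_size j + (if j = i then cell_size i / l else 0)"
  proof (cases i j rule: linorder_cases)
    case less
    then show ?thesis
      using integral_score_at_mult[OF assms less] integral_abs_score_at_mult[OF assms less] by simp
  next
    case equal
    have "score_variance l i \<le> 4 * cell_size i * cell_size i + cell_size i / l"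
      using score_variance_le[OF assms, of i] cell_size_nonneg[of i] by (simp add: add_increasing)
    then show ?thesis
      using equal integral_score_at_sq[OF assms, of i] by (auto simp: power2_eq_square)
  next
    case greater
    have swap: "score_at l j z * score_at l i z = score_at l i z * score_at l j z" for z
      by (simp add: mult.commute)
    show ?thesis
      using integral_score_at_mult[OF assms greater] integral_abs_score_at_mult[OF assms greater] greater
      by (simp add: swap mult_ac)
  qed
  then show "integrable (Darts l) (\<lambda>z. score_at l i z * score_at l j z)"
    and "integrable (Darts l) (\<lambda>z. \<bar>score_at l i z * score_at l j z\<bar>)"
    and "(\<integral>z. score_at l i z * score_at l j z \<partial>Darts l) = (if j = i then score_variance l i else 0)"
    and "(\<integral>z. \<bar>score_at l i z * score_at l j z\<bar> \<partial>Darts l) \<le>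
      4 * cell_size i * cell_size j + (if j = i then cell_size i / l else 0)"
    by auto
qed

definition total_score :: "real \<Rightarrow> (nat \<Rightarrow> nat) \<Rightarrow> real" where
  "total_score l z = (\<Sum>i. score_at l i z)"

lemma AE_total_score:
  assumes "0 < l"
  shows "AE z in Darts l. summable (\<lambda>i. \<bar>score_at l i z\<bar>) \<and>
    total_score l z = state_score l (Ystate C \<phi> z)"
  using AE_feasible[OF assms]
proof eventually_elim
  case (elim z)
  then have "finite (free_hits (Ystate C \<phi> z))" by (simp add: feasible_def)
  then show ?case
    using summable_abs_score_at score_at_sums by (simp add: total_score_def sums_iff)
qed

lemma total_score_measurable: "0 < l \<Longrightarrow> total_score l \<in> borel_measurable (Darts l)"
  unfolding total_score_def[abs_def]
  by (intro borel_measurable_suminf borel_measurable_integrable integrable_score_at)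

lemma score_at_products_summable:
  assumes "0 < l"
  shows "summable (\<lambda>j. \<integral>z. \<bar>score_at l i z * score_at l j z\<bar> \<partial>Darts l)"
    and "(\<Sum>j. \<integral>z. \<bar>score_at l i z * score_at l j z\<bar> \<partial>Darts l) \<le> cell_size i * (4 + 1 / l)"
proof -
  let ?B = "\<lambda>j. 4 * cell_size i * cell_size j + (if j = i then cell_size i / l else 0)"
  have "?B sums (4 * cell_size i * 1 + cell_size i / l)"
    by (intro sums_add sums_mult cell_size_sums sums_single)
  then have B: "?B sums (cell_size i * (4 + 1 / l))"
    by (simp add: distrib_left mult.commute)
  have le: "norm (\<integral>z. \<bar>score_at l i z * score_at l j z\<bar> \<partial>Darts l) \<le> ?B j" for j
    using integral_score_at_mult_cases(4)[OF assms, of i j] by simp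
  show summable: "summable (\<lambda>j. \<integral>z. \<bar>score_at l i z * score_at l j z\<bar> \<partial>Darts l)"
    using le by (intro summable_comparison_test[OF _ sums_summable[OF B]]) auto
  have "(\<Sum>j. \<integral>z. \<bar>score_at l i z * score_at l j z\<bar> \<partial>Darts l) \<le> suminf ?B"
    using le by (intro suminf_le summable sums_summable[OF B]) (simp add: abs_le_iff)
  then show "(\<Sum>j. \<integral>z. \<bar>score_at l i z * score_at l j z\<bar> \<partial>Darts l) \<le> cell_size i * (4 + 1 / l)"
    using B by (simp add: sums_iff)
qed

lemma AE_summable_score_at_mult:
  assumes "0 < l"
  shows "AE z in Darts l. summable (\<lambda>j. \<bar>score_at l i z * score_at l j z\<bar>)"
  using AE_total_score[OF assms] by eventually_elim (simp add: abs_mult summable_mult)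

lemma integral_score_at_total_score:
  assumes "0 < l"
  shows "integrable (Darts l) (\<lambda>z. score_at l i z * total_score l z)"
    and "(\<integral>z. score_at l i z * total_score l z \<partial>Darts l) = score_variance l i"
proof -
  have AE_eq: "AE z in Darts l. (\<Sum>j. score_at l i z * score_at l j z) = score_at l i z * total_score l z"
    using AE_total_score[OF assms]
    by eventually_elim (simp add: total_score_def suminf_mult summable_rabs_cancel)
  have meas: "(\<lambda>z. score_at l i z * total_score l z) \<in> borel_measurable (Darts l)"
    using borel_measurable_integrable[OF integrable_score_at[OF assms]] total_score_measurable[OF assms]
    by measurable
  note dominated = integral_score_at_mult_cases(1)[OF assms] AE_summable_score_at_mult[OF assms]
    score_at_products_summable(1)[OF assms]
  have int_sum: "integrable (Darts l) (\<lambda>z. \<Sum>j. score_at l i z * score_at l j z)"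
    using dominated by (intro integrable_suminf) simp_all
  show "integrable (Darts l) (\<lambda>z. score_at l i z * total_score l z)"
    by (rule integrable_cong_AE_imp[OF int_sum meas AE_eq])
  have "(\<integral>z. score_at l i z * total_score l z \<partial>Darts l) =
      (\<integral>z. (\<Sum>j. score_at l i z * score_at l j z) \<partial>Darts l)"
    by (rule integral_cong_AE[OF meas borel_measurable_integrable[OF int_sum]])
       (use AE_eq in \<open>auto elim: eventually_mono\<close>)
  also have "\<dots> = (\<Sum>j. \<integral>z. score_at l i z * score_at l j z \<partial>Darts l)"
    using dominated by (intro integral_suminf) simp_all
  also have "\<dots> = score_variance l i"
    using sums_single[of i "\<lambda>_. score_variance l i"]
    by (simp add: integral_score_at_mult_cases(3)[OF assms] sums_iff)
  finally show "(\<integral>z. score_at l i z * total_score l z \<partial>Darts l) = score_variance l i" .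
qed

lemma integral_abs_score_at_total_score_le:
  assumes "0 < l"
  shows "(\<integral>z. \<bar>score_at l i z * total_score l z\<bar> \<partial>Darts l) \<le> cell_size i * (4 + 1 / l)"
proof -
  note dominated = integral_score_at_mult_cases(2)[OF assms] AE_summable_score_at_mult[OF assms]
    score_at_products_summable(1)[OF assms]
  have "(\<integral>z. \<bar>score_at l i z * total_score l z\<bar> \<partial>Darts l) \<le>
      (\<integral>z. (\<Sum>j. \<bar>score_at l i z * score_at l j z\<bar>) \<partial>Darts l)"
  proof (rule integral_mono_AE')
    show "integrable (Darts l) (\<lambda>z. \<Sum>j. \<bar>score_at l i z * score_at l j z\<bar>)"
      using dominated by (intro integrable_suminf) simp_all
    show "AE z in Darts l. \<bar>score_at l i z * total_score l z\<bar> \<le> (\<Sum>j. \<bar>score_at l i z * score_at l j z\<bar>)"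
      using AE_total_score[OF assms]
    proof eventually_elim
      case (elim z)
      have "\<bar>score_at l i z * total_score l z\<bar> = \<bar>score_at l i z\<bar> * \<bar>\<Sum>j. score_at l j z\<bar>"
        by (simp add: total_score_def abs_mult)
      also have "\<dots> \<le> \<bar>score_at l i z\<bar> * (\<Sum>j. \<bar>score_at l j z\<bar>)"
        using elim by (intro mult_left_mono summable_rabs) auto
      also have "\<dots> = (\<Sum>j. \<bar>score_at l i z * score_at l j z\<bar>)"
        using elim by (simp add: suminf_mult abs_mult)
      finally show ?case .
    qed
    show "AE z in Darts l. 0 \<le> (\<Sum>j. \<bar>score_at l i z * score_at l j z\<bar>)"
      using AE_summable_score_at_mult[OF assms, of i] by eventually_elim (simp add: suminf_nonneg)
  qed
  also have "\<dots> = (\<Sum>j. \<integral>z. \<bar>score_at l i z * score_at l j z\<bar> \<partial>Darts l)"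
    using dominated by (intro integral_suminf) simp_all
  finally show ?thesis using score_at_products_summable(2)[OF assms, of i] by linarith
qed

lemma integral_total_score_sq:
  assumes "0 < l"
  shows "integrable (Darts l) (\<lambda>z. (total_score l z)\<^sup>2)"
    and "(\<integral>z. (total_score l z)\<^sup>2 \<partial>Darts l) = (\<Sum>i. score_variance l i)"
    and "summable (score_variance l)"
proof -
  note product = integral_score_at_total_score[OF assms] integral_abs_score_at_total_score_le[OF assms]
  have AE_summable: "AE z in Darts l. summable (\<lambda>i. norm (score_at l i z * total_score l z))"
    using AE_total_score[OF assms] by eventually_elim (simp add: abs_mult summable_mult2)
  have le: "norm (\<integral>z. norm (score_at l i z * total_score l z) \<partial>Darts l) \<le> cell_size i * (4 + 1 / l)"
    for i using product(3)[of i] by simp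
  have ints: "summable (\<lambda>i. \<integral>z. norm (score_at l i z * total_score l z) \<partial>Darts l)"
    using le by (intro summable_comparison_test[OF _ summable_mult2[OF summable_cell_size]]) auto
  note int_sum = integrable_suminf[OF product(1) AE_summable ints]
  have AE_eq: "AE z in Darts l. (\<Sum>i. score_at l i z * total_score l z) = (total_score l z)\<^sup>2"
    using AE_total_score[OF assms]
    by eventually_elim (simp add: total_score_def suminf_mult2[symmetric] power2_eq_square summable_rabs_cancel)
  have meas: "(\<lambda>z. (total_score l z)\<^sup>2) \<in> borel_measurable (Darts l)"
    using total_score_measurable[OF assms] by measurable
  show "integrable (Darts l) (\<lambda>z. (total_score l z)\<^sup>2)"
    by (rule integrable_cong_AE_imp[OF int_sum meas AE_eq])
  have "(\<integral>z. (total_score l z)\<^sup>2 \<partial>Darts l) = (\<integral>z. (\<Sum>i. score_at l i z * total_score l z) \<partial>Darts l)"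
    by (rule integral_cong_AE[OF meas borel_measurable_integrable[OF int_sum]])
       (use AE_eq in \<open>auto elim: eventually_mono\<close>)
  then show "(\<integral>z. (total_score l z)\<^sup>2 \<partial>Darts l) = (\<Sum>i. score_variance l i)"
    using integral_suminf[OF product(1) AE_summable ints] by (simp add: product(2))
  show "summable (score_variance l)"
    using summable_integral[OF product(1) AE_summable ints] by (simp add: product(2))
qed

lemma fisherY_eq_nn_integral:
  assumes "0 < l"
  shows "ennreal (l\<^sup>2) * fisherY C p \<phi> l =
    (\<integral>\<^sup>+z. ennreal (l\<^sup>2 * (state_score l (Ystate C \<phi> z))\<^sup>2) \<partial>Darts l)"
proof -
  let ?P = "Ypmf C p \<phi> l"
  have "ennreal (l\<^sup>2) * fisherY C p \<phi> l = ennreal (l\<^sup>2) *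
      (\<integral>\<^sup>+y. ennreal ((deriv (\<lambda>x. Ypmf C p \<phi> x y) l)\<^sup>2 / ?P y) \<partial>count_space {y. feasible y})"
    unfolding fisherY_def Ypmf_pos_iff[OF assms] infsum_ennreal_eq_nn_integral[OF countable_feasible] ..
  also have "\<dots> = (\<integral>\<^sup>+y. ennreal (?P y) * ennreal (l\<^sup>2 * (state_score l y)\<^sup>2) \<partial>count_space {y. feasible y})"
  proof (subst nn_integral_cmult[symmetric], simp, rule nn_integral_cong)
    fix y assume "y \<in> space (count_space {y. feasible y})"
    then have y: "feasible y" "0 < ?P y" using Ypmf_pos_iff[OF assms] by auto
    then have "(deriv (\<lambda>x. Ypmf C p \<phi> x y) l)\<^sup>2 / ?P y = ?P y * (state_score l y)\<^sup>2"
      by (simp add: deriv_Ypmf[OF assms] power2_eq_square)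
    then show "ennreal (l\<^sup>2) * ennreal ((deriv (\<lambda>x. Ypmf C p \<phi> x y) l)\<^sup>2 / ?P y) =
        ennreal (?P y) * ennreal (l\<^sup>2 * (state_score l y)\<^sup>2)"
      using y by (simp add: ennreal_mult[symmetric] mult_ac)
  qed
  also have "\<dots> = (\<integral>\<^sup>+z. ennreal (l\<^sup>2 * (state_score l (Ystate C \<phi> z))\<^sup>2) \<partial>Darts l)"
    by (rule nn_integral_Ypmf[OF assms])
  finally show ?thesis .
qed

lemma fisherY_eq:
  assumes "0 < l"
  shows "ennreal (l\<^sup>2) * fisherY C p \<phi> l = (\<Sum>\<^sub>\<infinity>i\<in>C. ennreal (Idot (p i * l) * prPhi0 C p \<phi> l i))"
proof -
  note sq = integral_total_score_sq[OF assms]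
  have "ennreal (l\<^sup>2) * fisherY C p \<phi> l = (\<integral>\<^sup>+z. ennreal (l\<^sup>2 * (total_score l z)\<^sup>2) \<partial>Darts l)"
    unfolding fisherY_eq_nn_integral[OF assms]
    by (rule nn_integral_cong_AE, rule eventually_mono[OF AE_total_score[OF assms]]) simp
  also have "\<dots> = ennreal (\<integral>z. l\<^sup>2 * (total_score l z)\<^sup>2 \<partial>Darts l)"
    using sq(1) by (intro nn_integral_eq_integral) auto
  also have "\<dots> = ennreal (\<Sum>i. l\<^sup>2 * score_variance l i)"
    using sq(2,3) by (simp add: suminf_mult)
  also have "\<dots> = (\<Sum>i. ennreal (l\<^sup>2 * score_variance l i))"
    using score_variance_nonneg[OF assms] sq(3)
    by (intro suminf_ennreal2[symmetric]) (auto intro: summable_mult)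
  also have "\<dots> = (\<Sum>\<^sub>\<infinity>i\<in>C. ennreal (Idot (p i * l) * prPhi0 C p \<phi> l i))"
    unfolding infsum_ennreal_eq_suminf
    by (intro suminf_cong) (simp add: score_variance_def Idot_def power_mult_distrib field_simps)
  finally show ?thesis .
qed

end

theorem mainTheorem11:
  fixes C :: "nat set" and p :: "nat \<Rightarrow> real" and \<phi> :: "bool list \<Rightarrow> bool" and lam :: real
  assumes "dartboard C p" and "mono_sketch \<phi>" and "0 < lam"
  shows "entropyY C p \<phi> lam = (\<Sum>\<^sub>\<infinity>i\<in>C. ennreal (Hdot (p i * lam) * prPhi0 C p \<phi> lam i))
       \<and> ennreal (lam\<^sup>2) * fisherY C p \<phi> lam = (\<Sum>\<^sub>\<infinity>i\<in>C. ennreal (Idot (p i * lam) * prPhi0 C p \<phi> lam i))"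
proof -
  interpret dartboard_sketch C p \<phi> by unfold_locales (rule assms(1))
  show ?thesis using entropyY_eq[OF assms(3)] fisherY_eq[OF assms(3)] by simp
qed

end
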